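(* Let $G$ be a finite simple graph of order $n\ge 3$ and let $e(G)$ denote its number of edges. (a) Suppose every vertex of $G$ lies in a cycle of $G$. Then $crx_1(G)=e(G)$ if and only if $G$ is the cycle $C_n$. (b) Suppose $G$ is $2$-connected. Then $crx_2(G)=e(G)$ if and only if $G$ is minimally $2$-connected. (c) Suppose $G$ is Hamiltonian, and let $1\le k\le n$. Then $crx_k(G)=e(G)$ if and only if $G$ is the cycle $C_n$.
   Context: An edge-coloured cycle is rainbow if its edges have distinct colours. For $k\ge 1$, let $\mathcal F_k$ be the family of graphs in which any $k$ vertices lie in a common cycle. For $G\in\mathcal F_k$, a $k$-rainbow cycle colouring of $G$ is an edge-colouring such that every set of $k$ vertices lies in some rainbow cycle; $crx_k(G)$, the $k$-rainbow cycle index, is the minimum number of colours in a $k$-rainbow cycle colouring of $G$. A graph is minimally $2$-connected if it is $2$-connected and deleting any edge destroys $2$-connectivity. *)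

theory Defs
  imports Main
begin

definition simple_graph :: "'a set \<Rightarrow> 'a set set \<Rightarrow> bool" where
  "simple_graph V E \<longleftrightarrow> finite V \<and> (\<forall>e\<in>E. e \<subseteq> V \<and> card e = 2)"

definition adj :: "'a set set \<Rightarrow> 'a \<Rightarrow> 'a \<Rightarrow> bool" where
  "adj E u v \<longleftrightarrow> {u, v} \<in> E"

definition is_cycle :: "'a set \<Rightarrow> 'a set set \<Rightarrow> 'a list \<Rightarrow> bool" where
  "is_cycle V E vs \<longleftrightarrow> length vs \<ge> 3 \<and> distinct vs \<and> set vs \<subseteq> V \<and>
     (\<forall>i < length vs. adj E (vs ! i) (vs ! ((i + 1) mod length vs)))"

definition cycle_edges :: "'a list \<Rightarrow> 'a set set" where
  "cycle_edges vs = {{vs ! i, vs ! ((i + 1) mod length vs)} | i. i < length vs}"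

definition rainbow_cycle :: "'a set \<Rightarrow> 'a set set \<Rightarrow> ('a set \<Rightarrow> nat) \<Rightarrow> 'a list \<Rightarrow> bool" where
  "rainbow_cycle V E c vs \<longleftrightarrow> is_cycle V E vs \<and> inj_on c (cycle_edges vs)"

definition in_F :: "nat \<Rightarrow> 'a set \<Rightarrow> 'a set set \<Rightarrow> bool" where
  "in_F k V E \<longleftrightarrow> (\<forall>S. S \<subseteq> V \<and> card S = k \<longrightarrow> (\<exists>vs. is_cycle V E vs \<and> S \<subseteq> set vs))"

definition k_rainbow_cycle_colouring ::
  "nat \<Rightarrow> 'a set \<Rightarrow> 'a set set \<Rightarrow> ('a set \<Rightarrow> nat) \<Rightarrow> bool" where
  "k_rainbow_cycle_colouring k V E c \<longleftrightarrow>
     (\<forall>S. S \<subseteq> V \<and> card S = k \<longrightarrow> (\<exists>vs. rainbow_cycle V E c vs \<and> S \<subseteq> set vs))"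

definition num_colours :: "'a set set \<Rightarrow> ('a set \<Rightarrow> nat) \<Rightarrow> nat" where
  "num_colours E c = card (c ` E)"

text \<open>k-rainbow cycle index (meaningful for graphs in F_k).\<close>
definition crx :: "nat \<Rightarrow> 'a set \<Rightarrow> 'a set set \<Rightarrow> nat" where
  "crx k V E = (LEAST m. \<exists>c. k_rainbow_cycle_colouring k V E c \<and> num_colours E c = m)"

definition connected :: "'a set \<Rightarrow> 'a set set \<Rightarrow> bool" where
  "connected V E \<longleftrightarrow> V \<noteq> {} \<and>
     (\<forall>u\<in>V. \<forall>v\<in>V. (\<lambda>x y. x \<in> V \<and> y \<in> V \<and> adj E x y)\<^sup>*\<^sup>* u v)"

definition two_connected :: "'a set \<Rightarrow> 'a set set \<Rightarrow> bool" where
  "two_connected V E \<longleftrightarrow> card V \<ge> 3 \<and> connected V E \<and>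
     (\<forall>v\<in>V. connected (V - {v}) {e \<in> E. v \<notin> e})"

definition minimally_two_connected :: "'a set \<Rightarrow> 'a set set \<Rightarrow> bool" where
  "minimally_two_connected V E \<longleftrightarrow> two_connected V E \<and>
     (\<forall>e\<in>E. \<not> two_connected V (E - {e}))"

definition hamiltonian :: "'a set \<Rightarrow> 'a set set \<Rightarrow> bool" where
  "hamiltonian V E \<longleftrightarrow> (\<exists>vs. is_cycle V E vs \<and> set vs = V)"

text \<open>G is (isomorphic to) the cycle C_n, n = |V|: a Hamiltonian cycle using exactly all edges.\<close>
definition is_cycle_graph :: "'a set \<Rightarrow> 'a set set \<Rightarrow> bool" where
  "is_cycle_graph V E \<longleftrightarrow> (\<exists>vs. is_cycle V E vs \<and> set vs = V \<and> cycle_edges vs = E)"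

end

theory Submission
  imports Defs
begin

text \<open>
  Say that a vertex set S forces an edge g if every cycle through S uses g. If a k-rainbow
  colouring gives distinct edges e and f the same colour, no k-set forces both of them;
  conversely, if no k-set forces both, recolouring f with the colour of e in an injective
  colouring keeps it k-rainbow. So for G in F_k, crx_k(G) = e(G) iff every two distinct
  edges are forced by a common k-set.

  In C_n the only cycle is C_n itself, so every set forces every edge. A Hamiltonian graph
  other than C_n has an edge off a Hamiltonian cycle, which no set forces. A non-Hamiltonian
  graph covered by cycles has an irredundant cycle cover with at least two cycles; edges at
  private vertices of two of them are never forced by a single vertex. A 2-connected graph
  lies in F_2 (Whitney), and if G - g is still 2-connected, no pair of vertices forces g.

  If G is minimally 2-connected, then for every edge e, deleting e and at most one vertex
  leaves two sides joined by e alone, so every cycle meeting both sides uses e. Comparing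
  these separations for two edges e and f yields either two vertices separated by both, or
  a vertex b of degree two whose neighbours lie on opposite sides of one separation while b
  and one of its neighbours lie on opposite sides of the other.
\<close>

section \<open>Cycles as vertex lists\<close>

fun path_edges :: "'a list \<Rightarrow> 'a set set" where
  "path_edges (a # b # xs) = insert {a, b} (path_edges (b # xs))"
| "path_edges _ = {}"

lemma path_edges_Cons: "xs \<noteq> [] \<Longrightarrow> path_edges (a # xs) = insert {a, hd xs} (path_edges xs)"
  by (cases xs) auto

lemma path_edges_append:
  "path_edges (xs @ ys) =
     path_edges xs \<union> path_edges ys \<union> (if xs = [] \<or> ys = [] then {} else {{last xs, hd ys}})"
  by (induction xs rule: path_edges.induct) (auto simp: path_edges_Cons)

lemma path_edges_append_Cons:
  "path_edges (xs @ y # ys) = path_edges (xs @ [y]) \<union> path_edges (y # ys)"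
  by (cases "xs = []") (auto simp: path_edges_append)

lemma path_edges_rev: "path_edges (rev xs) = path_edges xs"
proof (induction xs rule: path_edges.induct)
  case (1 a b xs)
  have "path_edges (rev (a # b # xs)) = insert {b, a} (path_edges (rev (b # xs)))"
    by (simp add: path_edges_append)
  with 1 show ?case by (simp add: insert_commute)
qed auto

lemma path_edges_subset_set: "g \<in> path_edges xs \<Longrightarrow> g \<subseteq> set xs"
  by (induction xs rule: path_edges.induct) auto

lemma path_edges_closed_set:
  assumes "hd xs \<in> S" "path_edges xs \<subseteq> E" "\<And>z t. z \<in> S \<Longrightarrow> {z, t} \<in> E \<Longrightarrow> t \<in> S"
  shows "set xs \<subseteq> S"
  using assms by (induction xs rule: path_edges.induct) auto

lemma path_edges_conv_nth: "path_edges xs = (\<lambda>i. {xs ! i, xs ! Suc i}) ` {..<length xs - 1}"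
proof (induction xs rule: path_edges.induct)
  case (1 a b xs)
  then show ?case by (simp add: lessThan_Suc_eq_insert_0 image_image)
qed auto

lemma cycle_edges_conv_path_edges:
  assumes "vs \<noteq> []"
  shows "cycle_edges vs = insert {last vs, hd vs} (path_edges vs)"
proof -
  let ?n = "length vs"
  have "cycle_edges vs = (\<lambda>i. {vs ! i, vs ! ((i + 1) mod ?n)}) ` {..<Suc (?n - 1)}"
    using assms unfolding cycle_edges_def by (auto simp: image_def)
  also have "\<dots> = insert {vs ! (?n - 1), vs ! 0} ((\<lambda>i. {vs ! i, vs ! Suc i}) ` {..<?n - 1})"
    unfolding lessThan_Suc image_insert using assms by (auto intro!: image_cong)
  finally show ?thesis
    using assms by (simp add: path_edges_conv_nth last_conv_nth hd_conv_nth)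
qed

lemma cycle_edges_subset_set: "g \<in> cycle_edges vs \<Longrightarrow> g \<subseteq> set vs"
  by (cases "vs = []") (auto simp: cycle_edges_def cycle_edges_conv_path_edges dest: path_edges_subset_set)

lemma is_cycle_iff_cycle_edges:
  "is_cycle V E vs \<longleftrightarrow> 3 \<le> length vs \<and> distinct vs \<and> set vs \<subseteq> V \<and> cycle_edges vs \<subseteq> E"
  unfolding is_cycle_def cycle_edges_def adj_def by auto

lemma is_cycleI:
  assumes "distinct vs" "3 \<le> length vs" "set vs \<subseteq> V" "path_edges vs \<subseteq> E" "{last vs, hd vs} \<in> E"
  shows "is_cycle V E vs"
proof -
  have "vs \<noteq> []" using assms(2) by auto
  then show ?thesis using assms by (auto simp: is_cycle_iff_cycle_edges cycle_edges_conv_path_edges)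
qed

lemma cycle_edges_rotate1: "cycle_edges (rotate1 vs) = cycle_edges vs"
proof (cases "2 \<le> length vs")
  case True
  then obtain a xs where "vs = a # xs" by (cases vs) auto
  moreover have "xs \<noteq> []" using True calculation by auto
  ultimately show ?thesis
    by (auto simp: cycle_edges_conv_path_edges path_edges_append path_edges_Cons)
next
  case False
  then have "rotate1 vs = vs" by (cases vs) (auto simp: Suc_le_eq)
  then show ?thesis by simp
qed

lemma cycle_edges_rotate: "cycle_edges (rotate n vs) = cycle_edges vs"
  by (induction n) (auto simp: cycle_edges_rotate1)

lemma is_cycle_rotate_to:
  assumes "is_cycle V E vs" "b \<in> set vs"
  obtains ys where "is_cycle V E (b # ys)" "set (b # ys) = set vs"
    "cycle_edges (b # ys) = cycle_edges vs"
proof -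
  obtain xs ys where "vs = xs @ b # ys" using split_list[OF assms(2)] by blast
  then have rot: "rotate (length xs) vs = b # ys @ xs" by (simp add: rotate_append)
  have "is_cycle V E (rotate (length xs) vs)"
    using assms(1) by (simp add: is_cycle_iff_cycle_edges cycle_edges_rotate)
  with rot show ?thesis
    using that[of "ys @ xs"] cycle_edges_rotate[of "length xs" vs] set_rotate[of "length xs" vs]
    by simp
qed

lemma cycle_edges_at_vertex:
  assumes "is_cycle V E vs" "b \<in> set vs"
  obtains a c where "a \<noteq> c" "a \<noteq> b" "c \<noteq> b" "\<And>t. {b, t} \<in> cycle_edges vs \<longleftrightarrow> t = a \<or> t = c"
proof -
  obtain ys where cyc: "is_cycle V E (b # ys)" and edges: "cycle_edges (b # ys) = cycle_edges vs"
    using is_cycle_rotate_to[OF assms] by metis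
  then obtain a zs where ys: "ys = a # zs" "zs \<noteq> []" "distinct (b # a # zs)"
    unfolding is_cycle_iff_cycle_edges by (cases ys; cases "tl ys") auto
  have "last zs \<in> set zs" using ys(2) by simp
  then have distinct: "a \<noteq> last zs" "b \<noteq> last zs" "a \<noteq> b" using ys(3) by auto
  have "{b, t} \<notin> path_edges ys" for t
    using path_edges_subset_set[of "{b, t}" ys] ys(1,3) by auto
  moreover have "cycle_edges vs = insert {last zs, b} (insert {b, a} (path_edges ys))"
    using edges ys(1,2) by (simp add: cycle_edges_conv_path_edges)
  ultimately have "{b, t} \<in> cycle_edges vs \<longleftrightarrow> t = a \<or> t = last zs" for t
    using distinct by (simp add: doubleton_eq_iff) blast
  with distinct show ?thesis using that by blast
qed

section \<open>Walks and 2-connected graphs\<close>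

definition adj_in :: "'a set \<Rightarrow> 'a set set \<Rightarrow> 'a \<Rightarrow> 'a \<Rightarrow> bool" where
  "adj_in V E x y \<longleftrightarrow> x \<in> V \<and> y \<in> V \<and> adj E x y"

lemma connected_iff_adj_in:
  "connected V E \<longleftrightarrow> V \<noteq> {} \<and> (\<forall>u\<in>V. \<forall>v\<in>V. (adj_in V E)\<^sup>*\<^sup>* u v)"
proof -
  have "adj_in V E = (\<lambda>x y. x \<in> V \<and> y \<in> V \<and> adj E x y)" by (auto simp: adj_in_def fun_eq_iff)
  then show ?thesis unfolding connected_def by simp
qed

lemma rtranclp_adj_in_mono:
  "V \<subseteq> V' \<Longrightarrow> E \<subseteq> E' \<Longrightarrow> (adj_in V E)\<^sup>*\<^sup>* x y \<Longrightarrow> (adj_in V' E')\<^sup>*\<^sup>* x y"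
  by (erule rtranclp_mono[THEN predicate2D, rotated]) (auto simp: adj_in_def adj_def)

lemma rtranclp_leaves_set:
  assumes "P\<^sup>*\<^sup>* a b" "a \<in> S" "b \<notin> S"
  obtains s t where "s \<in> S" "t \<notin> S" "P s t"
  using assms by (induction rule: rtranclp_induct) auto

definition walk :: "'a set \<Rightarrow> 'a set set \<Rightarrow> 'a list \<Rightarrow> 'a \<Rightarrow> 'a \<Rightarrow> bool" where
  "walk V E P a b \<longleftrightarrow> P \<noteq> [] \<and> hd P = a \<and> last P = b \<and> set P \<subseteq> V \<and> path_edges P \<subseteq> E"

lemma rtranclp_adj_in_imp_walk:
  assumes "(adj_in V E)\<^sup>*\<^sup>* a b" "a \<in> V"
  obtains P where "walk V E P a b"
  using assms
proof (induction arbitrary: thesis rule: rtranclp_induct)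
  case base
  show ?case by (rule base.prems(1)[of "[a]"]) (use base.prems(2) in \<open>simp add: walk_def\<close>)
next
  case (step y z)
  obtain P where "walk V E P a y" using step.IH step.prems(2) by blast
  then have "walk V E (P @ [z]) a z"
    using step.hyps(2) by (auto simp: walk_def adj_in_def adj_def path_edges_append)
  then show ?case by (rule step.prems(1))
qed

lemma walk_imp_path:
  assumes "walk V E P a b"
  obtains Q where "walk V E Q a b" "distinct Q"
  using assms
proof (induction "length P" arbitrary: P rule: less_induct)
  case less
  show ?case
  proof (cases "distinct P")
    case True
    then show ?thesis using less.prems by blast
  next
    case False
    then obtain xs ys zs y where P: "P = xs @ y # ys @ y # zs"
      using not_distinct_decomp by fastforce
    let ?Q = "xs @ y # zs"
    have "path_edges (y # zs) \<subseteq> path_edges (y # ys @ y # zs)"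
      using path_edges_append_Cons[of "y # ys" y zs] by auto
    then have "path_edges ?Q \<subseteq> path_edges P"
      using path_edges_append_Cons[of xs y zs] path_edges_append_Cons[of xs y "ys @ y # zs"] P
      by blast
    moreover have "hd ?Q = hd P" using P by (cases xs) auto
    moreover have "last ?Q = last P" using P by (cases zs) auto
    ultimately have "walk V E ?Q a b" using less.prems(2) P by (auto simp: walk_def)
    moreover have "length ?Q < length P" using P by simp
    ultimately show ?thesis using less.hyps less.prems(1) by blast
  qed
qed

lemma rtranclp_adj_in_imp_path:
  assumes "(adj_in V E)\<^sup>*\<^sup>* a b" "a \<in> V"
  obtains P where "walk V E P a b" "distinct P"
  using rtranclp_adj_in_imp_walk[OF assms] walk_imp_path by metis

lemma simple_graph_edgeE:
  assumes "simple_graph V E" "g \<in> E"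
  obtains a b where "a \<noteq> b" "g = {a, b}" "a \<in> V" "b \<in> V"
proof -
  have "g \<subseteq> V" "card g = 2" using assms unfolding simple_graph_def by auto
  then show ?thesis using that unfolding card_2_iff by blast
qed

lemma simple_graph_edgeD:
  assumes "simple_graph V E" "{a, b} \<in> E"
  shows "a \<noteq> b" "a \<in> V" "b \<in> V"
proof -
  have "{a, b} \<subseteq> V" "card {a, b} = 2" using assms unfolding simple_graph_def by auto
  then show "a \<noteq> b" "a \<in> V" "b \<in> V" by (cases "a = b"; simp)+
qed

lemma simple_graph_finite_edges: "simple_graph V E \<Longrightarrow> finite E"
  unfolding simple_graph_def by (metis Pow_iff finite_Pow_iff finite_subset subsetI)

lemma obtain_third_vertex:
  assumes "finite V" "3 \<le> card V"
  obtains w where "w \<in> V" "w \<noteq> a" "w \<noteq> b"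
proof -
  have "card {a, b} \<le> 2" by (simp add: card_insert_le_m1)
  then have "\<not> V \<subseteq> {a, b}" using card_mono[of "{a, b}" V] assms(2) by fastforce
  then show ?thesis using that by blast
qed

lemma two_connected_adj_in:
  assumes "two_connected V E" "a \<in> V" "b \<in> V"
  shows "(adj_in V E)\<^sup>*\<^sup>* a b"
  using assms unfolding two_connected_def connected_iff_adj_in by blast

lemma two_connected_adj_in_avoiding:
  assumes "two_connected V E" "w \<in> V" "a \<in> V - {w}" "b \<in> V - {w}"
  shows "(adj_in (V - {w}) {g \<in> E. w \<notin> g})\<^sup>*\<^sup>* a b"
proof -
  have "connected (V - {w}) {g \<in> E. w \<notin> g}" using assms(1,2) unfolding two_connected_def by blast
  then show ?thesis using assms(3,4) unfolding connected_iff_adj_in by blast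
qed

lemma two_connected_edge_on_cycle:
  assumes sg: "simple_graph V E" and tc: "two_connected V E" and uy: "{u, y} \<in> E"
  obtains vs where "is_cycle V E vs" "u \<in> set vs" "y \<in> set vs"
proof -
  have u_y: "u \<noteq> y" "u \<in> V" "y \<in> V" using simple_graph_edgeD[OF sg uy] by auto
  have "finite V" using sg unfolding simple_graph_def by blast
  moreover have "3 \<le> card V" using tc unfolding two_connected_def by blast
  ultimately obtain w where w: "w \<in> V" "w \<noteq> u" "w \<noteq> y" by (rule obtain_third_vertex)
  let ?E' = "E - {{u, y}}"
  have "(adj_in (V - {u}) {g \<in> E. u \<notin> g})\<^sup>*\<^sup>* y w"
    using two_connected_adj_in_avoiding[OF tc u_y(2)] u_y w by auto
  then have yw: "(adj_in V ?E')\<^sup>*\<^sup>* y w" by (rule rtranclp_adj_in_mono[rotated 2]) auto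
  have "(adj_in (V - {y}) {g \<in> E. y \<notin> g})\<^sup>*\<^sup>* w u"
    using two_connected_adj_in_avoiding[OF tc u_y(3)] u_y w by auto
  then have wu: "(adj_in V ?E')\<^sup>*\<^sup>* w u" by (rule rtranclp_adj_in_mono[rotated 2]) auto
  obtain P where P: "walk V ?E' P y u" "distinct P"
    using rtranclp_adj_in_imp_path[OF rtranclp_trans[OF yw wu] u_y(3)] by blast
  have "3 \<le> length P"
  proof (rule ccontr)
    assume "\<not> 3 \<le> length P"
    then consider "length P \<le> 1" | a b where "P = [a, b]"
      by (cases P; cases "tl P") (auto simp: Suc_le_eq)
    then show False
    proof cases
      case 1
      then have "hd P = last P" using P(1) unfolding walk_def by (cases P) auto
      then show False using P(1) u_y(1) unfolding walk_def by simp
    next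
      case 2
      then show False using P(1) unfolding walk_def by (auto simp: insert_commute)
    qed
  qed
  moreover have "{last P, hd P} \<in> E" using P(1) uy unfolding walk_def by simp
  ultimately have "is_cycle V E P" using P unfolding walk_def by (auto intro: is_cycleI)
  moreover have "u \<in> set P" "y \<in> set P" using P(1) unfolding walk_def by auto
  ultimately show ?thesis using that by blast
qed

lemma cycles_through_ear:
  assumes cyc: "is_cycle V E (x # r1 @ z # r2)"
    and pre: "distinct pre" "pre \<noteq> []" "set pre \<subseteq> V - set (x # r1 @ z # r2)"
    and ear: "path_edges (x # pre @ [z]) \<subseteq> E"
  shows "is_cycle V E (x # pre @ z # r2)" "is_cycle V E (x # r1 @ z # rev pre)"
proof -
  let ?C = "x # r1 @ z # r2"
  have C: "distinct ?C" "set ?C \<subseteq> V" "path_edges ?C \<subseteq> E" "{last (z # r2), x} \<in> E"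
    using cyc by (auto simp: is_cycle_iff_cycle_edges cycle_edges_conv_path_edges)
  have arcs: "path_edges ?C = path_edges (x # r1 @ [z]) \<union> path_edges (z # r2)"
    using path_edges_append_Cons[of "x # r1" z r2] by simp
  have ear_edges: "path_edges (x # pre @ [z]) = insert {x, hd pre} (path_edges (pre @ [z]))"
    using pre(2) by (cases pre) auto
  have "path_edges (x # pre @ z # r2) = path_edges (x # pre @ [z]) \<union> path_edges (z # r2)"
    using path_edges_append_Cons[of "x # pre" z r2] by simp
  then show "is_cycle V E (x # pre @ z # r2)"
    using C pre ear arcs by (intro is_cycleI) (auto simp: Suc_le_eq neq_Nil_conv)
  have "path_edges (z # rev pre) = path_edges (pre @ [z])"
    using path_edges_rev[of "pre @ [z]"] by simp
  moreover have "path_edges (x # r1 @ z # rev pre) = path_edges (x # r1 @ [z]) \<union> path_edges (z # rev pre)"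
    using path_edges_append_Cons[of "x # r1" z "rev pre"] by simp
  moreover have "last (x # r1 @ z # rev pre) = hd pre"
    using pre(2) by (simp add: last_rev)
  ultimately show "is_cycle V E (x # r1 @ z # rev pre)"
    using C pre ear arcs ear_edges by (intro is_cycleI) (auto simp: insert_commute Suc_le_eq)
qed

lemma two_connected_extend_cycle:
  assumes sg: "simple_graph V E" and tc: "two_connected V E"
    and cs: "is_cycle V E cs" and u: "u \<in> set cs" "u \<noteq> x" and x: "x \<in> set cs"
    and xy: "{x, y} \<in> E" and y: "y \<notin> set cs"
  obtains vs where "is_cycle V E vs" "u \<in> set vs" "y \<in> set vs"
proof -
  have y_V: "y \<in> V - {x}" using simple_graph_edgeD[OF sg xy] by auto
  have "x \<in> V" "u \<in> V - {x}" using cs u x unfolding is_cycle_def by auto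
  then have "(adj_in (V - {x}) {g \<in> E. x \<notin> g})\<^sup>*\<^sup>* y u"
    using two_connected_adj_in_avoiding[OF tc _ y_V] by blast
  then obtain P where P: "walk (V - {x}) {g \<in> E. x \<notin> g} P y u" "distinct P"
    using rtranclp_adj_in_imp_path[OF _ y_V] by blast
  then have "\<exists>t\<in>set P. t \<in> set cs" using u unfolding walk_def by (metis last_in_set)
  then obtain pre z post where Ppre: "P = pre @ z # post" and z: "z \<in> set cs"
      and pre_off: "\<forall>t\<in>set pre. t \<notin> set cs"
    using split_list_first_prop[of P "\<lambda>t. t \<in> set cs"] by blast
  have "pre \<noteq> []" using Ppre P(1) z y unfolding walk_def by auto
  then have hd_pre: "hd pre = y" using Ppre P(1) unfolding walk_def by simp
  have "path_edges (pre @ [z]) \<subseteq> path_edges P"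
    using Ppre path_edges_append[of "pre @ [z]" post] by auto
  then have ear: "path_edges (x # pre @ [z]) \<subseteq> E"
    using \<open>pre \<noteq> []\<close> hd_pre xy P(1) unfolding walk_def by (cases pre) auto
  have "z \<noteq> x" "set pre \<subseteq> V - {x}" "distinct pre"
    using P Ppre unfolding walk_def by auto
  obtain rest where C: "is_cycle V E (x # rest)" "set (x # rest) = set cs"
    using is_cycle_rotate_to[OF cs x] by metis
  then obtain r1 r2 where rest: "rest = r1 @ z # r2"
    using z \<open>z \<noteq> x\<close> by (metis set_ConsD split_list)
  have pre_V: "set pre \<subseteq> V - set (x # r1 @ z # r2)"
    using pre_off C(2) rest \<open>set pre \<subseteq> V - {x}\<close> by auto
  note cycles = cycles_through_ear[OF C(1)[unfolded rest] \<open>distinct pre\<close> \<open>pre \<noteq> []\<close> pre_V ear]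
  have "u \<in> set (z # r2) \<or> u \<in> set r1" using u C(2) rest by auto
  then show ?thesis
  proof
    assume "u \<in> set (z # r2)"
    then show ?thesis using that[OF cycles(1)] hd_pre \<open>pre \<noteq> []\<close> by auto
  next
    assume "u \<in> set r1"
    then show ?thesis using that[OF cycles(2)] hd_pre \<open>pre \<noteq> []\<close> by auto
  qed
qed

lemma two_connected_cycle_through:
  assumes sg: "simple_graph V E" and tc: "two_connected V E"
    and u: "u \<in> V" and v: "v \<in> V" and uv: "u \<noteq> v"
  obtains vs where "is_cycle V E vs" "u \<in> set vs" "v \<in> set vs"
proof -
  have "t = u \<or> (\<exists>vs. is_cycle V E vs \<and> u \<in> set vs \<and> t \<in> set vs)" if "(adj_in V E)\<^sup>*\<^sup>* u t" for t
    using that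
  proof (induction rule: rtranclp_induct)
    case (step s t)
    have st: "{s, t} \<in> E" using step(2) unfolding adj_in_def adj_def by simp
    show ?case
    proof (cases "s = u")
      case True
      then show ?thesis using two_connected_edge_on_cycle[OF sg tc] st by metis
    next
      case False
      then obtain cs where cs: "is_cycle V E cs" "u \<in> set cs" "s \<in> set cs" using step(3) by blast
      show ?thesis
      proof (cases "t \<in> set cs")
        case True
        then show ?thesis using cs by blast
      next
        case False
        then show ?thesis
          using two_connected_extend_cycle[OF sg tc cs(1,2) _ cs(3) st] \<open>s \<noteq> u\<close> by metis
      qed
    qed
  qed simp
  then show ?thesis using two_connected_adj_in[OF tc u v] uv that by blast
qed

section \<open>Edges forced by sets of vertices\<close>

definition forces :: "'a set \<Rightarrow> 'a set set \<Rightarrow> 'a set \<Rightarrow> 'a set \<Rightarrow> bool" where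
  "forces V E S g \<longleftrightarrow> (\<forall>vs. is_cycle V E vs \<and> S \<subseteq> set vs \<longrightarrow> g \<in> cycle_edges vs)"

lemma forces_mono: "S \<subseteq> T \<Longrightarrow> forces V E S g \<Longrightarrow> forces V E T g"
  unfolding forces_def by blast

lemma num_colours_inj_on: "inj_on c E \<Longrightarrow> num_colours E c = card E"
  unfolding num_colours_def by (rule card_image)

lemma num_colours_fun_upd_less:
  assumes "finite E" "inj_on c E" "e \<in> E" "f \<in> E" "e \<noteq> f"
  shows "num_colours E (c(f := c e)) < card E"
proof -
  have "(c(f := c e)) ` E = c ` (E - {f})" using assms(3-5) by force
  then have "num_colours E (c(f := c e)) = card (E - {f})"
    unfolding num_colours_def using assms(2) by (simp add: card_image inj_on_diff)
  also have "\<dots> < card E" using assms(1,4) by (rule card_Diff1_less)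
  finally show ?thesis .
qed

lemma inj_on_fun_upd_merge:
  assumes "inj_on c E" "X \<subseteq> E" "e \<in> E" "\<not> (e \<in> X \<and> f \<in> X)"
  shows "inj_on (c(f := c e)) X"
proof (cases "f \<in> X")
  case True
  then have "c e \<notin> c ` X" using assms(4) inj_on_image_mem_iff[OF assms(1,3,2)] by blast
  then show ?thesis by (rule inj_on_fun_updI[OF inj_on_subset[OF assms(1,2)]])
next
  case False
  have "inj_on c X" by (rule inj_on_subset[OF assms(1,2)])
  then show ?thesis using False by (auto simp: inj_on_def)
qed

lemma rainbow_colouring_if_inj_on:
  assumes "in_F k V E" "inj_on c E"
  shows "k_rainbow_cycle_colouring k V E c"
  unfolding k_rainbow_cycle_colouring_def
proof (intro allI impI)
  fix S assume "S \<subseteq> V \<and> card S = k"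
  then obtain vs where "is_cycle V E vs" "S \<subseteq> set vs" using assms(1) unfolding in_F_def by blast
  moreover from this(1) have "inj_on c (cycle_edges vs)"
    using assms(2) by (auto simp: is_cycle_iff_cycle_edges intro: inj_on_subset)
  ultimately show "\<exists>vs. rainbow_cycle V E c vs \<and> S \<subseteq> set vs"
    unfolding rainbow_cycle_def by blast
qed

lemma crx_le_num_colours:
  assumes "k_rainbow_cycle_colouring k V E c"
  shows "crx k V E \<le> num_colours E c"
  unfolding crx_def by (rule Least_le) (use assms in blast)

lemma crx_attained:
  assumes "k_rainbow_cycle_colouring k V E c"
  obtains c' where "k_rainbow_cycle_colouring k V E c'" "num_colours E c' = crx k V E"
proof -
  have "\<exists>c'. k_rainbow_cycle_colouring k V E c' \<and> num_colours E c' = crx k V E"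
    unfolding crx_def by (rule LeastI_ex) (use assms in blast)
  then show ?thesis using that by blast
qed

lemma crx_less_card:
  assumes sg: "simple_graph V E" and ef: "e \<in> E" "f \<in> E" "e \<noteq> f"
    and avoid: "\<And>S. S \<subseteq> V \<Longrightarrow> card S = k \<Longrightarrow> \<not> (forces V E S e \<and> forces V E S f)"
  shows "crx k V E < card E"
proof -
  have fin: "finite E" using sg by (rule simple_graph_finite_edges)
  then obtain c :: "'a set \<Rightarrow> nat" where c: "inj_on c E" using finite_imp_inj_to_nat_seg by blast
  have "k_rainbow_cycle_colouring k V E (c(f := c e))"
    unfolding k_rainbow_cycle_colouring_def
  proof (intro allI impI)
    fix S assume "S \<subseteq> V \<and> card S = k"
    then obtain vs where vs: "is_cycle V E vs" "S \<subseteq> set vs" "\<not> (e \<in> cycle_edges vs \<and> f \<in> cycle_edges vs)"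
      using avoid unfolding forces_def by blast
    then have "inj_on (c(f := c e)) (cycle_edges vs)"
      using inj_on_fun_upd_merge[OF c _ ef(1)] by (simp add: is_cycle_iff_cycle_edges)
    then show "\<exists>vs. rainbow_cycle V E (c(f := c e)) vs \<and> S \<subseteq> set vs"
      using vs unfolding rainbow_cycle_def by blast
  qed
  then have "crx k V E \<le> num_colours E (c(f := c e))" by (rule crx_le_num_colours)
  also have "\<dots> < card E" using num_colours_fun_upd_less[OF fin c ef] .
  finally show ?thesis .
qed

theorem crx_eq_card_iff:
  assumes sg: "simple_graph V E" and F: "in_F k V E"
  shows "crx k V E = card E \<longleftrightarrow>
    (\<forall>e\<in>E. \<forall>f\<in>E. e \<noteq> f \<longrightarrow> (\<exists>S\<subseteq>V. card S = k \<and> forces V E S e \<and> forces V E S f))"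
    (is "_ \<longleftrightarrow> ?forcing")
proof
  assume eq: "crx k V E = card E"
  show ?forcing
  proof (intro ballI impI)
    fix e f assume ef: "e \<in> E" "f \<in> E" "e \<noteq> f"
    show "\<exists>S\<subseteq>V. card S = k \<and> forces V E S e \<and> forces V E S f"
    proof (rule ccontr)
      assume "\<not> ?thesis"
      then have "crx k V E < card E" by (intro crx_less_card[OF sg ef]) blast
      with eq show False by simp
    qed
  qed
next
  assume forcing: ?forcing
  obtain c0 :: "'a set \<Rightarrow> nat" where "inj_on c0 E"
    using simple_graph_finite_edges[OF sg] finite_imp_inj_to_nat_seg by blast
  then have c0: "k_rainbow_cycle_colouring k V E c0" by (rule rainbow_colouring_if_inj_on[OF F])
  then obtain c where c: "k_rainbow_cycle_colouring k V E c" "num_colours E c = crx k V E"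
    by (rule crx_attained)
  have "inj_on c E"
  proof (rule inj_onI, rule ccontr)
    fix e f assume ef: "e \<in> E" "f \<in> E" "c e = c f" "e \<noteq> f"
    then obtain S where S: "S \<subseteq> V" "card S = k" "forces V E S e" "forces V E S f"
      using forcing by blast
    then obtain vs where "rainbow_cycle V E c vs" "S \<subseteq> set vs"
      using c(1) unfolding k_rainbow_cycle_colouring_def by blast
    then show False
      using S(3,4) ef unfolding rainbow_cycle_def forces_def inj_on_def by blast
  qed
  then have "card E = crx k V E" using c(2) by (simp add: num_colours_inj_on)
  moreover have "crx k V E \<le> card E"
    using crx_le_num_colours[OF c0] \<open>inj_on c0 E\<close> by (simp add: num_colours_inj_on)
  ultimately show "crx k V E = card E" by simp
qed

section \<open>Cycle graphs, Hamiltonian graphs and cycle covers\<close>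

lemma cycle_graph_cycle_edges:
  assumes sg: "simple_graph V E" and cg: "is_cycle_graph V E" and ws: "is_cycle V E ws"
  shows "cycle_edges ws = E"
proof -
  obtain vs where vs: "is_cycle V E vs" "set vs = V" "cycle_edges vs = E"
    using cg unfolding is_cycle_graph_def by blast
  have ws_E: "cycle_edges ws \<subseteq> E" using ws by (simp add: is_cycle_iff_cycle_edges)
  have closed: "{z, t} \<in> cycle_edges ws" if z: "z \<in> set ws" and zt: "{z, t} \<in> E" for z t
  proof -
    have "z \<in> set vs" using z ws vs(2) by (auto simp: is_cycle_iff_cycle_edges)
    then obtain p n where pn: "\<And>t. {z, t} \<in> E \<longleftrightarrow> t = p \<or> t = n"
      using cycle_edges_at_vertex[OF vs(1)] vs(3) by metis
    obtain a c where ac: "a \<noteq> c" "\<And>t. {z, t} \<in> cycle_edges ws \<longleftrightarrow> t = a \<or> t = c"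
      using cycle_edges_at_vertex[OF ws z] by metis
    then have "{z, a} \<in> E" "{z, c} \<in> E" using ws_E by blast+
    then have "a \<in> {p, n}" "c \<in> {p, n}" "t \<in> {p, n}" using pn zt by auto
    then show ?thesis using ac by auto
  qed
  have "ws \<noteq> []" using ws by (auto simp: is_cycle_iff_cycle_edges)
  then have "hd ws \<in> set vs" using ws vs(2) by (auto simp: is_cycle_iff_cycle_edges)
  then obtain ys where ys: "is_cycle V E (hd ws # ys)" "set (hd ws # ys) = V"
    using is_cycle_rotate_to[OF vs(1)] vs(2) by metis
  have "set (hd ws # ys) \<subseteq> set ws"
  proof (rule path_edges_closed_set)
    show "hd (hd ws # ys) \<in> set ws" using \<open>ws \<noteq> []\<close> by simp
    show "path_edges (hd ws # ys) \<subseteq> E"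
      using ys(1) by (auto simp: is_cycle_iff_cycle_edges cycle_edges_conv_path_edges)
    show "t \<in> set ws" if "z \<in> set ws" "{z, t} \<in> E" for z t
      using closed[OF that] cycle_edges_subset_set by blast
  qed
  then have "V \<subseteq> set ws" using ys(2) by auto
  have "E \<subseteq> cycle_edges ws"
  proof
    fix g assume "g \<in> E"
    then obtain a b where "g = {a, b}" "a \<in> V" by (rule simple_graph_edgeE[OF sg])
    then show "g \<in> cycle_edges ws" using closed \<open>V \<subseteq> set ws\<close> \<open>g \<in> E\<close> by blast
  qed
  then show ?thesis using ws_E by blast
qed

lemma hamiltonian_in_F: "hamiltonian V E \<Longrightarrow> in_F k V E"
  unfolding hamiltonian_def in_F_def by blast

lemma crx_cycle_graph:
  assumes sg: "simple_graph V E" and cg: "is_cycle_graph V E" and k: "k \<le> card V"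
  shows "crx k V E = card E"
proof -
  have "hamiltonian V E" using cg unfolding is_cycle_graph_def hamiltonian_def by blast
  then have F: "in_F k V E" by (rule hamiltonian_in_F)
  obtain S where "S \<subseteq> V" "card S = k" using obtain_subset_with_card_n[OF k] by metis
  moreover have "forces V E S g" if "g \<in> E" for S g
    using cycle_graph_cycle_edges[OF sg cg] that unfolding forces_def by blast
  ultimately show ?thesis unfolding crx_eq_card_iff[OF sg F] by blast
qed

lemma crx_less_card_if_hamiltonian_not_cycle_graph:
  assumes sg: "simple_graph V E" and ham: "hamiltonian V E" and not_cg: "\<not> is_cycle_graph V E"
  shows "crx k V E < card E"
proof -
  obtain vs where vs: "is_cycle V E vs" "set vs = V" using ham unfolding hamiltonian_def by blast
  have "cycle_edges vs \<subseteq> E" using vs(1) by (simp add: is_cycle_iff_cycle_edges)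
  moreover have "cycle_edges vs \<noteq> E" using not_cg vs unfolding is_cycle_graph_def by blast
  ultimately obtain e where e: "e \<in> E" "e \<notin> cycle_edges vs" by blast
  have "vs \<noteq> []" using vs(1) by (auto simp: is_cycle_iff_cycle_edges)
  then obtain f where f: "f \<in> cycle_edges vs" by (auto simp: cycle_edges_conv_path_edges)
  show ?thesis
  proof (rule crx_less_card[OF sg e(1)])
    show "f \<in> E" "e \<noteq> f" using f e \<open>cycle_edges vs \<subseteq> E\<close> by auto
    show "\<not> (forces V E S e \<and> forces V E S f)" if "S \<subseteq> V" for S
      using vs e(2) that unfolding forces_def by blast
  qed
qed

lemma irredundant_subcover:
  assumes "finite F" "\<forall>v\<in>V. \<exists>C\<in>F. v \<in> g C"
  obtains F' where "F' \<subseteq> F" "\<forall>v\<in>V. \<exists>C\<in>F'. v \<in> g C"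
    "\<And>C. C \<in> F' \<Longrightarrow> \<exists>p\<in>V. p \<in> g C \<and> (\<forall>C'\<in>F'. C' \<noteq> C \<longrightarrow> p \<notin> g C')"
proof -
  let ?cover = "\<lambda>F'. F' \<subseteq> F \<and> (\<forall>v\<in>V. \<exists>C\<in>F'. v \<in> g C)"
  obtain F' where F': "?cover F'" and least: "\<And>F''. ?cover F'' \<Longrightarrow> card F' \<le> card F''"
    using ex_has_least_nat[of ?cover F card] assms(2) by blast
  have "\<exists>p\<in>V. p \<in> g C \<and> (\<forall>C'\<in>F'. C' \<noteq> C \<longrightarrow> p \<notin> g C')" if C: "C \<in> F'" for C
  proof (rule ccontr)
    assume "\<not> ?thesis"
    then have "?cover (F' - {C})" using F' by blast
    then have "card F' \<le> card (F' - {C})" by (rule least)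
    moreover have "finite F'" using F' assms(1) finite_subset by blast
    ultimately show False using C card_Diff1_less by fastforce
  qed
  then show ?thesis using that F' by blast
qed

lemma finite_cycles: "finite V \<Longrightarrow> finite {vs. is_cycle V E vs}"
  by (rule finite_subset[OF _ finite_subset_distinct]) (auto simp: is_cycle_iff_cycle_edges)

lemma edge_pair_avoided_if_not_hamiltonian:
  assumes sg: "simple_graph V E" and "V \<noteq> {}"
    and cov: "\<forall>v\<in>V. \<exists>vs. is_cycle V E vs \<and> v \<in> set vs" and not_ham: "\<not> hamiltonian V E"
  obtains e f where "e \<in> E" "f \<in> E" "e \<noteq> f"
    "\<And>v. v \<in> V \<Longrightarrow> \<exists>vs. is_cycle V E vs \<and> v \<in> set vs \<and> \<not> (e \<in> cycle_edges vs \<and> f \<in> cycle_edges vs)"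
proof -
  have "finite V" using sg unfolding simple_graph_def by blast
  then have fin: "finite {vs. is_cycle V E vs}" by (rule finite_cycles)
  have "\<forall>v\<in>V. \<exists>C\<in>{vs. is_cycle V E vs}. v \<in> set C" using cov by simp
  then obtain F where F: "F \<subseteq> {vs. is_cycle V E vs}" "\<forall>v\<in>V. \<exists>C\<in>F. v \<in> set C"
    and private_point: "\<And>C. C \<in> F \<Longrightarrow> \<exists>p\<in>V. p \<in> set C \<and> (\<forall>C'\<in>F. C' \<noteq> C \<longrightarrow> p \<notin> set C')"
    by (rule irredundant_subcover[OF fin]) blast
  have private_edge: "\<exists>e\<in>cycle_edges C. e \<in> E \<and> (\<forall>C'\<in>F. e \<in> cycle_edges C' \<longrightarrow> C' = C)"
    if C: "C \<in> F" for C
  proof -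
    obtain p where p: "p \<in> set C" "\<forall>C'\<in>F. C' \<noteq> C \<longrightarrow> p \<notin> set C'" using private_point[OF C] by blast
    have cyc: "is_cycle V E C" using C F(1) by blast
    then obtain a where "{p, a} \<in> cycle_edges C" using cycle_edges_at_vertex[OF cyc p(1)] by metis
    moreover have "{p, a} \<in> E" using calculation cyc by (auto simp: is_cycle_iff_cycle_edges)
    ultimately show ?thesis using p(2) cycle_edges_subset_set by blast
  qed
  obtain C1 where C1: "C1 \<in> F" using F(2) \<open>V \<noteq> {}\<close> by blast
  then have "set C1 \<noteq> V" using F(1) not_ham unfolding hamiltonian_def by blast
  then obtain v where "v \<in> V" "v \<notin> set C1" using C1 F(1) by (auto simp: is_cycle_iff_cycle_edges)
  then obtain C2 where C2: "C2 \<in> F" "C1 \<noteq> C2" using F(2) by blast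
  obtain e where e: "e \<in> cycle_edges C1" "e \<in> E" "\<forall>C'\<in>F. e \<in> cycle_edges C' \<longrightarrow> C' = C1"
    using private_edge[OF C1] by blast
  obtain f where f: "f \<in> cycle_edges C2" "f \<in> E" "\<forall>C'\<in>F. f \<in> cycle_edges C' \<longrightarrow> C' = C2"
    using private_edge[OF C2(1)] by blast
  have "e \<noteq> f" using e(3) f(1) C2 by blast
  show ?thesis
  proof (rule that[OF e(2) f(2) \<open>e \<noteq> f\<close>])
    fix v assume "v \<in> V"
    then obtain C where "C \<in> F" "v \<in> set C" using F(2) by blast
    then show "\<exists>vs. is_cycle V E vs \<and> v \<in> set vs \<and> \<not> (e \<in> cycle_edges vs \<and> f \<in> cycle_edges vs)"
      using F(1) e(3) f(3) C2(2) by blast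
  qed
qed

section \<open>Minimally 2-connected graphs\<close>

text \<open>
  A separation (A, B, W) witnesses that G - e is not 2-connected: W is empty or a single
  vertex, and once W is deleted, e is the only edge between A and B.
\<close>
definition separation :: "'a set \<Rightarrow> 'a set set \<Rightarrow> 'a set \<Rightarrow> 'a set \<Rightarrow> 'a set \<Rightarrow> 'a set \<Rightarrow> bool" where
  "separation V E e A B W \<longleftrightarrow> A \<inter> B = {} \<and> A \<inter> W = {} \<and> B \<inter> W = {} \<and> A \<union> B \<union> W = V \<and>
     (\<exists>w. W \<subseteq> {w}) \<and> e \<inter> A \<noteq> {} \<and> e \<inter> B \<noteq> {} \<and> (\<forall>s\<in>A. \<forall>t\<in>B. {s, t} \<in> E \<longrightarrow> {s, t} = e)"

lemma separation_sym: "separation V E e A B W \<Longrightarrow> separation V E e B A W"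
  unfolding separation_def by (simp add: Int_commute Un_commute insert_commute conj_comms)

lemma separation_crossing_edge:
  assumes "separation V E e A B W" "{s, t} \<in> E" "s \<in> A" "t \<in> B"
  shows "{s, t} = e"
  using assms unfolding separation_def by simp

lemma separation_edgeE:
  assumes "simple_graph V E" "separation V E e A B W" "e \<in> E"
  obtains u v where "e = {u, v}" "u \<in> A" "v \<in> B"
proof -
  obtain u v where uv: "e = {u, v}" using simple_graph_edgeE[OF assms(1,3)] by metis
  have "A \<inter> B = {}" "e \<inter> A \<noteq> {}" "e \<inter> B \<noteq> {}" using assms(2) unfolding separation_def by simp_all
  then have "(u \<in> A \<and> v \<in> B) \<or> (v \<in> A \<and> u \<in> B)" unfolding uv by auto
  then show ?thesis using that uv by (metis insert_commute)
qed

lemma separation_path_one_side: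
  assumes sep: "separation V E e A B W" and L: "path_edges L \<subseteq> E - {e}" "set L \<subseteq> A \<union> B"
  shows "set L \<subseteq> A \<or> set L \<subseteq> B"
  using L
proof (induction L rule: path_edges.induct)
  case (1 a b xs)
  have "{a, b} \<in> E" "{a, b} \<noteq> e" using "1.prems"(1) by auto
  then have "\<not> (a \<in> A \<and> b \<in> B)" "\<not> (a \<in> B \<and> b \<in> A)"
    using separation_crossing_edge[OF sep] by (metis insert_commute)+
  moreover have "A \<inter> B = {}" using sep unfolding separation_def by simp
  moreover have "set (b # xs) \<subseteq> A \<or> set (b # xs) \<subseteq> B" using 1 by simp
  ultimately show ?case using "1.prems"(2) by auto
qed auto

lemma separation_forces:
  assumes sep: "separation V E e A B W" and p: "p \<in> A" and q: "q \<in> B"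
  shows "forces V E {p, q} e"
  unfolding forces_def
proof (intro allI impI, rule ccontr)
  fix vs assume vs: "is_cycle V E vs \<and> {p, q} \<subseteq> set vs" and e: "e \<notin> cycle_edges vs"
  have parts: "A \<inter> B = {}" "A \<union> B \<union> W = V" "\<exists>w. W \<subseteq> {w}" "p \<notin> W" "q \<notin> W"
    using sep p q unfolding separation_def by auto
  have vs_E: "cycle_edges vs \<subseteq> E - {e}" "set vs \<subseteq> V" "vs \<noteq> []"
    using vs e by (auto simp: is_cycle_iff_cycle_edges)
  obtain L where L: "set L \<subseteq> A \<union> B" "{p, q} \<subseteq> set L" "path_edges L \<subseteq> E - {e}"
  proof (cases "set vs \<inter> W = {}")
    case True
    then show ?thesis using that[of vs] vs vs_E parts(2)
      by (auto simp: cycle_edges_conv_path_edges)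
  next
    case False
    then obtain w where w: "w \<in> set vs" "w \<in> W" by auto
    then have "W \<subseteq> {w}" using parts(3) by auto
    obtain ys where ys: "is_cycle V E (w # ys)" "set (w # ys) = set vs"
      "cycle_edges (w # ys) = cycle_edges vs"
      using is_cycle_rotate_to[OF conjunct1[OF vs] w(1)] by metis
    then have "w \<notin> set ys" "ys \<noteq> []" by (auto simp: is_cycle_iff_cycle_edges)
    then have "path_edges ys \<subseteq> cycle_edges (w # ys)"
      by (auto simp: cycle_edges_conv_path_edges path_edges_Cons)
    moreover have "set ys \<subseteq> A \<union> B" "{p, q} \<subseteq> set ys"
      using ys(2) vs vs_E(2) w \<open>W \<subseteq> {w}\<close> \<open>w \<notin> set ys\<close> parts by auto
    ultimately show ?thesis using that[of ys] ys(3) vs_E(1) by auto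
  qed
  then have "set L \<subseteq> A \<or> set L \<subseteq> B" using separation_path_one_side[OF sep] by simp
  then show False using L(2) p q parts(1) by auto
qed

lemma separation_if_disconnected:
  assumes W: "W \<subseteq> V" "\<exists>w. W \<subseteq> {w}"
    and conn: "connected (V - W) {g \<in> E. g \<inter> W = {}}"
    and disc: "\<not> connected (V - W) {g \<in> E - {e}. g \<inter> W = {}}"
  obtains A B where "separation V E e A B W"
proof -
  let ?R = "adj_in (V - W) {g \<in> E - {e}. g \<inter> W = {}}"
  obtain a0 b0 where a0: "a0 \<in> V - W" and b0: "b0 \<in> V - W" and not_reach: "\<not> ?R\<^sup>*\<^sup>* a0 b0"
    using conn disc unfolding connected_iff_adj_in by auto
  define A where "A = {z \<in> V - W. ?R\<^sup>*\<^sup>* a0 z}"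
  define B where "B = V - W - A"
  have crossing: "{s, t} = e" if st: "s \<in> A" "t \<in> B" "{s, t} \<in> E" for s t
  proof (rule ccontr)
    assume "{s, t} \<noteq> e"
    then have "?R s t" using st unfolding A_def B_def adj_in_def adj_def by auto
    then have "t \<in> A" using st unfolding A_def B_def by (auto intro: rtranclp.rtrancl_into_rtrancl)
    then show False using st(2) unfolding B_def by simp
  qed
  have "(adj_in (V - W) {g \<in> E. g \<inter> W = {}})\<^sup>*\<^sup>* a0 b0"
    using conn a0 b0 unfolding connected_iff_adj_in by simp
  moreover have "a0 \<in> A" "b0 \<notin> A" using a0 not_reach unfolding A_def by auto
  ultimately obtain s t where st: "s \<in> A" "t \<notin> A" "adj_in (V - W) {g \<in> E. g \<inter> W = {}} s t"
    by (rule rtranclp_leaves_set)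
  then have "t \<in> B" "{s, t} \<in> E" unfolding A_def B_def adj_in_def adj_def by auto
  then have "e \<inter> A \<noteq> {}" "e \<inter> B \<noteq> {}" using crossing[of s t] st(1) by auto
  moreover have "A \<inter> B = {}" "A \<inter> W = {}" "B \<inter> W = {}" "A \<union> B \<union> W = V"
    using W(1) unfolding A_def B_def by auto
  ultimately have "separation V E e A B W"
    unfolding separation_def using W(2) crossing by simp
  then show ?thesis by (rule that)
qed

lemma separation_exists:
  assumes tc: "two_connected V E" and not_tc: "\<not> two_connected V (E - {e})"
  obtains A B W where "separation V E e A B W"
proof -
  have "card V \<ge> 3" "connected V E" and conn_w: "\<forall>w\<in>V. connected (V - {w}) {g \<in> E. w \<notin> g}"
    using tc unfolding two_connected_def by simp_all
  then have "\<not> connected V (E - {e}) \<or> (\<exists>w\<in>V. \<not> connected (V - {w}) {g \<in> E - {e}. w \<notin> g})"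
    using not_tc unfolding two_connected_def by simp
  then show ?thesis
  proof
    assume "\<not> connected V (E - {e})"
    moreover have eq: "{g \<in> E'. g \<inter> {} = {}} = E'" for E' :: "'a set set" by simp
    ultimately have "connected (V - {}) {g \<in> E. g \<inter> {} = {}}"
      "\<not> connected (V - {}) {g \<in> E - {e}. g \<inter> {} = {}}"
      using \<open>connected V E\<close> unfolding eq Diff_empty by simp_all
    then obtain A B where "separation V E e A B {}"
      by (rule separation_if_disconnected[rotated 2]) auto
    then show ?thesis by (rule that)
  next
    assume "\<exists>w\<in>V. \<not> connected (V - {w}) {g \<in> E - {e}. w \<notin> g}"
    then obtain w where w: "w \<in> V" "\<not> connected (V - {w}) {g \<in> E - {e}. w \<notin> g}" by blast
    moreover have eq: "{g \<in> E'. g \<inter> {w} = {}} = {g \<in> E'. w \<notin> g}" for E' :: "'a set set"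
      by auto
    ultimately have "connected (V - {w}) {g \<in> E. g \<inter> {w} = {}}"
      "\<not> connected (V - {w}) {g \<in> E - {e}. g \<inter> {w} = {}}"
      using conn_w unfolding eq by simp_all
    then obtain A B where "separation V E e A B {w}"
      by (rule separation_if_disconnected[rotated 2]) (use w in auto)
    then show ?thesis by (rule that)
  qed
qed

lemma separation_cut_vertex_neighbour:
  assumes sg: "simple_graph V E" and tc: "two_connected V E"
    and sep: "separation V E e A B W" and e: "e \<in> E" and w: "w \<in> W"
  obtains z where "z \<in> B" "{w, z} \<in> E"
proof -
  obtain a b where ab: "e = {a, b}" "a \<in> A" "b \<in> B" by (rule separation_edgeE[OF sg sep e])
  have parts: "A \<inter> B = {}" "A \<inter> W = {}" "B \<inter> W = {}" "A \<union> B \<union> W = V" "\<exists>w. W \<subseteq> {w}"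
    using sep unfolding separation_def by simp_all
  then have "W = {w}" using w by blast
  then have "a \<in> V" "b \<in> V - {a}" "w \<in> V - {a}" using parts ab w by auto
  then have "(adj_in (V - {a}) {g \<in> E. a \<notin> g})\<^sup>*\<^sup>* b w"
    by (rule two_connected_adj_in_avoiding[OF tc])
  moreover have "b \<in> B" "w \<notin> B" using ab(3) w parts(3) by auto
  ultimately obtain s t where st: "s \<in> B" "t \<notin> B" "adj_in (V - {a}) {g \<in> E. a \<notin> g} s t"
    by (rule rtranclp_leaves_set)
  then have st_E: "{s, t} \<in> E" "a \<notin> {s, t}" "t \<in> V" unfolding adj_in_def adj_def by auto
  have "t \<notin> A"
  proof
    assume "t \<in> A"
    moreover have "{t, s} \<in> E" using st_E(1) by (simp add: insert_commute)
    ultimately have "{t, s} = e" using separation_crossing_edge[OF sep] st(1) by blast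
    then show False using st_E(2) ab(1) by auto
  qed
  then have "t = w" using st(2) st_E(3) parts(4) \<open>W = {w}\<close> by auto
  then show ?thesis using that st(1) st_E(1) by (simp add: insert_commute)
qed

lemma separation_other_edge_one_side:
  assumes sg: "simple_graph V E" and sep: "separation V E f A B W" and g: "g \<in> E" "g \<noteq> f"
  shows "g \<inter> A = {} \<or> g \<inter> B = {}"
proof (rule ccontr)
  assume "\<not> ?thesis"
  then obtain s t where st: "s \<in> g" "s \<in> A" "t \<in> g" "t \<in> B" by blast
  have "A \<inter> B = {}" using sep unfolding separation_def by simp
  then have "s \<noteq> t" using st by blast
  obtain a b where "g = {a, b}" by (rule simple_graph_edgeE[OF sg g(1)])
  with st(1,3) \<open>s \<noteq> t\<close> have "g = {s, t}" by auto
  then show False using separation_crossing_edge[OF sep _ st(2,4)] g by simp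
qed

lemma forces_via_degree_two:
  assumes sep: "separation V E f A B W" and nbrs: "\<And>s. {b, s} \<in> E \<Longrightarrow> s = s1 \<or> s = s2"
    and s1: "s1 \<in> A" and s2: "s2 \<in> B"
  shows "forces V E {b} f"
  unfolding forces_def
proof (intro allI impI)
  fix vs assume vs: "is_cycle V E vs \<and> {b} \<subseteq> set vs"
  then have "b \<in> set vs" by simp
  then obtain a c where ac: "a \<noteq> c" "a \<noteq> b" "c \<noteq> b" "\<And>t. {b, t} \<in> cycle_edges vs \<longleftrightarrow> t = a \<or> t = c"
    using cycle_edges_at_vertex[OF conjunct1[OF vs]] by metis
  then have ac_cycle: "{b, a} \<in> cycle_edges vs" "{b, c} \<in> cycle_edges vs" by auto
  then have "{b, a} \<in> E" "{b, c} \<in> E" using vs by (auto simp: is_cycle_iff_cycle_edges)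
  then have "a \<in> {s1, s2}" "c \<in> {s1, s2}" using nbrs by auto
  then have "{s1, s2} \<subseteq> {a, c}" using ac(1) by auto
  moreover have "{a, c} \<subseteq> set vs" using ac_cycle cycle_edges_subset_set by blast
  ultimately have "{s1, s2} \<subseteq> set vs" by (rule subset_trans)
  then show "f \<in> cycle_edges vs" using separation_forces[OF sep s1 s2] vs unfolding forces_def by blast
qed

definition forced_together :: "'a set \<Rightarrow> 'a set set \<Rightarrow> 'a set \<Rightarrow> 'a set \<Rightarrow> bool" where
  "forced_together V E e f \<longleftrightarrow> (\<exists>p\<in>V. \<exists>q\<in>V. p \<noteq> q \<and> forces V E {p, q} e \<and> forces V E {p, q} f)"

lemma forced_togetherI:
  "p \<in> V \<Longrightarrow> q \<in> V \<Longrightarrow> p \<noteq> q \<Longrightarrow> forces V E {p, q} e \<Longrightarrow> forces V E {p, q} f \<Longrightarrow>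
    forced_together V E e f"
  unfolding forced_together_def by blast

lemma forced_together_commute: "forced_together V E e f \<Longrightarrow> forced_together V E f e"
  unfolding forced_together_def by blast

lemma forced_together_if_crossing:
  assumes se: "separation V E e A B W" and sf: "separation V E f A' B' W'"
    and p: "p \<in> A" "p \<in> A'" and q: "q \<in> B" "q \<in> B'"
  shows "forced_together V E e f"
proof -
  have "p \<in> V" "q \<in> V" "p \<noteq> q" using se p q unfolding separation_def by auto
  then show ?thesis
    using separation_forces[OF se p(1) q(1)] separation_forces[OF sf p(2) q(2)] by (rule forced_togetherI)
qed

text \<open>
  As B = {b} and W = {t}, the only neighbours of b are u and t. The separation of f puts
  them on opposite sides, so every cycle through b uses f.
\<close>
lemma forced_together_singleton_side:
  assumes sg: "simple_graph V E" and se: "separation V E e A {b} {t}" and e: "e = {u, b}" "u \<in> A"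
    and sf: "separation V E f A' B' W'" and u: "u \<in> A'" and t: "t \<in> B'"
  shows "forced_together V E e f"
proof -
  have "A \<inter> {b} = {}" "A \<union> {b} \<union> {t} = V" using se unfolding separation_def by simp_all
  then have parts: "A \<union> {b} \<union> {t} = V" "b \<notin> A" by auto
  have nbrs: "s = u \<or> s = t" if bs: "{b, s} \<in> E" for s
  proof -
    have "s \<in> V" "s \<noteq> b" using simple_graph_edgeD[OF sg bs] by auto
    moreover have "{s, b} = e" if "s \<in> A"
      using separation_crossing_edge[OF se _ that] bs by (simp add: insert_commute)
    ultimately show ?thesis using parts(1) e(1) by (auto simp: doubleton_eq_iff)
  qed
  have "forces V E {b} f" by (rule forces_via_degree_two[OF sf nbrs u t])
  then have "forces V E {u, b} f" by (rule forces_mono[rotated]) blast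
  moreover have "forces V E {u, b} e" using separation_forces[OF se e(2)] by simp
  moreover have "u \<in> V" "b \<in> V" "u \<noteq> b" using parts e(2) by auto
  ultimately show ?thesis by (intro forced_togetherI)
qed

lemma forced_together_one_endpoint_in_cut:
  assumes sg: "simple_graph V E" and tc: "two_connected V E" and e: "e \<in> E"
    and se: "separation V E e Ae Be We" and sf: "separation V E f Af Bf Wf"
    and f: "f = {x, y}" "x \<in> Af" "x \<notin> Be" "y \<in> Bf" "y \<in> We"
    and v: "v \<in> Be" "v \<in> Af"
  shows "forced_together V E e f"
proof -
  have se_parts: "Ae \<inter> Be = {}" "Ae \<union> Be \<union> We = V" "\<exists>w. We \<subseteq> {w}"
    and sf_parts: "Af \<inter> Bf = {}" "Af \<inter> Wf = {}" "Bf \<inter> Wf = {}" "Af \<union> Bf \<union> Wf = V" "\<exists>w. Wf \<subseteq> {w}"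
    using se sf unfolding separation_def by simp_all
  have "We = {y}" using se_parts(3) f(5) by blast
  have "x \<noteq> y" using f(2,4) sf_parts(1) by blast
  then have x: "x \<in> Ae" using f(2,3) sf_parts(4) se_parts(2) \<open>We = {y}\<close> by blast
  consider z where "z \<in> Ae" "z \<in> Bf" | z where "z \<in> Be" "z \<in> Bf" | "Bf = {y}"
    using f(4) sf_parts(4) se_parts(2) \<open>We = {y}\<close> by blast
  then show ?thesis
  proof cases
    case (1 z)
    then show ?thesis using forced_together_if_crossing[OF se separation_sym[OF sf]] v by blast
  next
    case (2 z)
    then show ?thesis using forced_together_if_crossing[OF se sf x f(2)] by blast
  next
    case 3
    obtain z where z: "z \<in> Be" "{y, z} \<in> E"
      by (rule separation_cut_vertex_neighbour[OF sg tc se e f(5)])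
    have "z \<noteq> y" using simple_graph_edgeD[OF sg z(2)] by simp
    moreover have "z \<notin> Af"
    proof
      assume "z \<in> Af"
      then have "{z, y} = f"
        using separation_crossing_edge[OF sf _ _ f(4)] z(2) by (simp add: insert_commute)
      then have "z = x" using \<open>z \<noteq> y\<close> f(1) by (auto simp: doubleton_eq_iff)
      then show False using x z(1) se_parts(1) by blast
    qed
    moreover have "z \<in> V" using simple_graph_edgeD[OF sg z(2)] by simp
    ultimately have "Wf = {z}" using 3 sf_parts(4,5) by blast
    then have "separation V E f Af {y} {z}" using sf 3 by simp
    from forced_together_singleton_side[OF sg this _ f(2) se x z(1)] f(1)
    show ?thesis by (auto intro: forced_together_commute simp: insert_commute)
  qed
qed

lemma forced_together_both_endpoints_in_cut:
  assumes sg: "simple_graph V E"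
    and se: "separation V E e Ae Be We" and sf: "separation V E f Af Bf Wf"
    and e: "e = {u, v}" "u \<in> Ae" "u \<notin> Bf" "v \<in> Be" "v \<in> Wf"
    and f: "f = {x, y}" "x \<in> Af" "x \<notin> Be" "y \<in> Bf" "y \<in> We"
  shows "forced_together V E e f"
proof -
  have se_parts: "Ae \<inter> Be = {}" "Ae \<union> Be \<union> We = V" "\<exists>w. We \<subseteq> {w}"
    and sf_parts: "Af \<inter> Bf = {}" "Af \<union> Bf \<union> Wf = V" "\<exists>w. Wf \<subseteq> {w}"
    using se sf unfolding separation_def by simp_all
  have "We = {y}" "Wf = {v}" using se_parts(3) sf_parts(3) f(5) e(5) by blast+
  have "u \<noteq> v" "x \<noteq> y" using e(2,4) f(2,4) se_parts(1) sf_parts(1) by blast+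
  then have u: "u \<in> Af" and x: "x \<in> Ae"
    using e(2,3) f(2,3) se_parts(2) sf_parts(2) \<open>We = {y}\<close> \<open>Wf = {v}\<close> by blast+
  consider z where "z \<in> Be" "z \<in> Bf" | "Be = {v}" | "Bf = {y}"
    | z z' where "z \<in> Be" "z \<in> Af" "z' \<in> Bf" "z' \<in> Ae"
    using e(4) f(4) se_parts(2) sf_parts(2) \<open>We = {y}\<close> \<open>Wf = {v}\<close> by blast
  then show ?thesis
  proof cases
    case (1 z)
    then show ?thesis using forced_together_if_crossing[OF se sf e(2) u] by blast
  next
    case 2
    then have "separation V E e Ae {v} {y}" using se \<open>We = {y}\<close> by simp
    then show ?thesis
      using forced_together_singleton_side[OF sg _ e(1) e(2) sf u f(4)] by blast
  next
    case 3
    then have "separation V E f Af {y} {v}" using sf \<open>Wf = {v}\<close> by simp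
    then show ?thesis
      using forced_together_singleton_side[OF sg _ f(1) f(2) se x e(4)] forced_together_commute by blast
  next
    case (4 z z')
    then show ?thesis using forced_together_if_crossing[OF se separation_sym[OF sf]] by blast
  qed
qed

lemma forced_together_if_separations:
  assumes sg: "simple_graph V E" and tc: "two_connected V E" and ef: "e \<in> E" "f \<in> E"
    and se: "separation V E e Ae Be We" and sf: "separation V E f Af Bf Wf"
    and e_Bf: "e \<inter> Bf = {}" and f_Be: "f \<inter> Be = {}"
  shows "forced_together V E e f"
proof -
  obtain u v where e: "e = {u, v}" "u \<in> Ae" "v \<in> Be" by (rule separation_edgeE[OF sg se ef(1)])
  obtain x y where f: "f = {x, y}" "x \<in> Af" "y \<in> Bf" by (rule separation_edgeE[OF sg sf ef(2)])
  have "u \<notin> Bf" "v \<notin> Bf" "x \<notin> Be" "y \<notin> Be" using e_Bf f_Be e(1) f(1) by auto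
  moreover have "V = Ae \<union> Be \<union> We" "V = Af \<union> Bf \<union> Wf" "u \<in> V" "v \<in> V" "x \<in> V" "y \<in> V"
    using se sf e f unfolding separation_def by auto
  ultimately consider "v \<in> Af" "y \<in> Ae" | "v \<in> Af" "y \<in> We" | "v \<in> Wf" "y \<in> Ae" | "v \<in> Wf" "y \<in> We"
    by blast
  then show ?thesis
  proof cases
    case 1
    then show ?thesis using forced_together_if_crossing[OF se separation_sym[OF sf]] e(3) f(3) by blast
  next
    case 2
    then show ?thesis
      using forced_together_one_endpoint_in_cut[OF sg tc ef(1) se sf f(1,2) \<open>x \<notin> Be\<close> f(3)] e(3) by blast
  next
    case 3
    then show ?thesis
      using forced_together_one_endpoint_in_cut[OF sg tc ef(2) sf se e(1,2) \<open>u \<notin> Bf\<close> e(3)] f(3)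
        forced_together_commute by blast
  next
    case 4
    then show ?thesis
      using forced_together_both_endpoints_in_cut[OF sg se sf e(1,2) \<open>u \<notin> Bf\<close> e(3) _ f(1,2) \<open>x \<notin> Be\<close> f(3)]
      by blast
  qed
qed

lemma minimally_two_connected_forced_together:
  assumes sg: "simple_graph V E" and min: "minimally_two_connected V E"
    and ef: "e \<in> E" "f \<in> E" "e \<noteq> f"
  shows "forced_together V E e f"
proof -
  have tc: "two_connected V E" and not_tc: "\<And>g. g \<in> E \<Longrightarrow> \<not> two_connected V (E - {g})"
    using min unfolding minimally_two_connected_def by auto
  obtain Ae Be We where se0: "separation V E e Ae Be We"
    by (rule separation_exists[OF tc not_tc[OF ef(1)]])
  obtain Af Bf Wf where sf0: "separation V E f Af Bf Wf"
    by (rule separation_exists[OF tc not_tc[OF ef(2)]])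
  txt \<open>Only f joins the two sides of its separation, so e misses one of them.\<close>
  obtain Af' Bf' where sf: "separation V E f Af' Bf' Wf" "e \<inter> Bf' = {}"
    using separation_other_edge_one_side[OF sg sf0 ef(1,3)] sf0 separation_sym[OF sf0] by blast
  obtain Ae' Be' where se: "separation V E e Ae' Be' We" "f \<inter> Be' = {}"
    using separation_other_edge_one_side[OF sg se0 ef(2) ef(3)[symmetric]] se0 separation_sym[OF se0] by blast
  show ?thesis by (rule forced_together_if_separations[OF sg tc ef(1,2) se(1) sf(1) sf(2) se(2)])
qed

section \<open>The three characterisations\<close>

lemma crx1_eq_card_iff_cycle_graph:
  assumes sg: "simple_graph V E" and "V \<noteq> {}"
    and cov: "\<forall>v\<in>V. \<exists>vs. is_cycle V E vs \<and> v \<in> set vs"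
  shows "crx 1 V E = card E \<longleftrightarrow> is_cycle_graph V E"
proof
  assume cg: "is_cycle_graph V E"
  have "1 \<le> card V" using sg \<open>V \<noteq> {}\<close> unfolding simple_graph_def by (simp add: Suc_le_eq card_gt_0_iff)
  then show "crx 1 V E = card E" by (rule crx_cycle_graph[OF sg cg])
next
  assume eq: "crx 1 V E = card E"
  show "is_cycle_graph V E"
  proof (rule ccontr)
    assume not_cg: "\<not> is_cycle_graph V E"
    have "crx 1 V E < card E"
    proof (cases "hamiltonian V E")
      case True
      then show ?thesis by (rule crx_less_card_if_hamiltonian_not_cycle_graph[OF sg _ not_cg])
    next
      case False
      then obtain e f where ef: "e \<in> E" "f \<in> E" "e \<noteq> f" and avoid:
        "\<And>v. v \<in> V \<Longrightarrow> \<exists>vs. is_cycle V E vs \<and> v \<in> set vs \<and> \<not> (e \<in> cycle_edges vs \<and> f \<in> cycle_edges vs)"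
        using edge_pair_avoided_if_not_hamiltonian[OF sg \<open>V \<noteq> {}\<close> cov] by metis
      show ?thesis
      proof (rule crx_less_card[OF sg ef])
        fix S assume "S \<subseteq> V" "card S = 1"
        then obtain v where "S = {v}" "v \<in> V" by (auto simp: card_1_singleton_iff)
        then show "\<not> (forces V E S e \<and> forces V E S f)" using avoid unfolding forces_def by blast
      qed
    qed
    with eq show False by simp
  qed
qed

lemma two_connected_in_F2:
  assumes sg: "simple_graph V E" and tc: "two_connected V E"
  shows "in_F 2 V E"
  unfolding in_F_def
proof (intro allI impI)
  fix S assume "S \<subseteq> V \<and> card S = 2"
  then obtain a b where ab: "S = {a, b}" "a \<in> V" "b \<in> V" "a \<noteq> b" by (auto simp: card_2_iff)
  obtain vs where "is_cycle V E vs" "a \<in> set vs" "b \<in> set vs"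
    by (rule two_connected_cycle_through[OF sg tc ab(2-4)])
  then show "\<exists>vs. is_cycle V E vs \<and> S \<subseteq> set vs" using ab(1) by auto
qed

lemma crx2_less_card_if_removable_edge:
  assumes sg: "simple_graph V E" and g: "g \<in> E" and tc_g: "two_connected V (E - {g})"
  shows "crx 2 V E < card E"
proof -
  have "simple_graph V (E - {g})" using sg by (simp add: simple_graph_def)
  then have F: "in_F 2 V (E - {g})" using tc_g by (rule two_connected_in_F2)
  have avoided: "\<exists>ws. is_cycle V E ws \<and> S \<subseteq> set ws \<and> g \<notin> cycle_edges ws"
    if S: "S \<subseteq> V" "card S = 2" for S
  proof -
    obtain ws where "is_cycle V (E - {g}) ws" "S \<subseteq> set ws" using F S unfolding in_F_def by auto
    then show ?thesis by (auto simp: is_cycle_iff_cycle_edges)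
  qed
  have "2 \<le> card V" using tc_g unfolding two_connected_def by simp
  then obtain S where "S \<subseteq> V" "card S = 2" by (metis obtain_subset_with_card_n)
  then obtain ws where ws: "is_cycle V E ws" "g \<notin> cycle_edges ws" using avoided by blast
  then have "ws \<noteq> []" by (auto simp: is_cycle_iff_cycle_edges)
  then obtain h where "h \<in> cycle_edges ws" by (auto simp: cycle_edges_conv_path_edges)
  then have "h \<in> E" "g \<noteq> h" using ws by (auto simp: is_cycle_iff_cycle_edges)
  then show ?thesis
  proof (rule crx_less_card[OF sg g])
    fix S assume "S \<subseteq> V" "card S = 2"
    then show "\<not> (forces V E S g \<and> forces V E S h)" using avoided unfolding forces_def by blast
  qed
qed

lemma crx2_eq_card_iff_minimally_two_connected:
  assumes sg: "simple_graph V E" and tc: "two_connected V E"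
  shows "crx 2 V E = card E \<longleftrightarrow> minimally_two_connected V E"
proof
  assume min: "minimally_two_connected V E"
  show "crx 2 V E = card E"
    unfolding crx_eq_card_iff[OF sg two_connected_in_F2[OF sg tc]]
  proof (intro ballI impI)
    fix e f assume "e \<in> E" "f \<in> E" "e \<noteq> f"
    then have "forced_together V E e f" by (rule minimally_two_connected_forced_together[OF sg min])
    then obtain p q where "p \<in> V" "q \<in> V" "p \<noteq> q" "forces V E {p, q} e" "forces V E {p, q} f"
      unfolding forced_together_def by blast
    then show "\<exists>S\<subseteq>V. card S = 2 \<and> forces V E S e \<and> forces V E S f"
      by (intro exI[of _ "{p, q}"]) simp
  qed
next
  assume eq: "crx 2 V E = card E"
  show "minimally_two_connected V E"
  proof (rule ccontr)
    assume "\<not> minimally_two_connected V E"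
    then have "\<exists>g\<in>E. two_connected V (E - {g})" using tc unfolding minimally_two_connected_def by simp
    then obtain g where "g \<in> E" "two_connected V (E - {g})" by blast
    then have "crx 2 V E < card E" by (rule crx2_less_card_if_removable_edge[OF sg])
    with eq show False by simp
  qed
qed

lemma crx_eq_card_iff_cycle_graph_if_hamiltonian:
  assumes sg: "simple_graph V E" and ham: "hamiltonian V E" and k: "k \<le> card V"
  shows "crx k V E = card E \<longleftrightarrow> is_cycle_graph V E"
  using crx_cycle_graph[OF sg _ k] crx_less_card_if_hamiltonian_not_cycle_graph[OF sg ham, of k] by (metis less_irrefl)

theorem theorem2p4:
  fixes V :: "'a set" and E :: "'a set set"
  assumes "simple_graph V E" and "card V \<ge> 3"
  shows "((\<forall>v\<in>V. \<exists>vs. is_cycle V E vs \<and> v \<in> set vs) \<longrightarrow>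
            (crx 1 V E = card E \<longleftrightarrow> is_cycle_graph V E))
       \<and> (two_connected V E \<longrightarrow>
            (crx 2 V E = card E \<longleftrightarrow> minimally_two_connected V E))
       \<and> (hamiltonian V E \<longrightarrow>
            (\<forall>k. 1 \<le> k \<and> k \<le> card V \<longrightarrow>
               (crx k V E = card E \<longleftrightarrow> is_cycle_graph V E)))"
proof (intro conjI impI allI)
  have "V \<noteq> {}" using assms(2) by auto
  then show "crx 1 V E = card E \<longleftrightarrow> is_cycle_graph V E"
    if "\<forall>v\<in>V. \<exists>vs. is_cycle V E vs \<and> v \<in> set vs"
    using crx1_eq_card_iff_cycle_graph[OF assms(1)] that by blast
  show "crx 2 V E = card E \<longleftrightarrow> minimally_two_connected V E" if "two_connected V E"
    using crx2_eq_card_iff_minimally_two_connected[OF assms(1) that] .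
  show "crx k V E = card E \<longleftrightarrow> is_cycle_graph V E" if "hamiltonian V E" "1 \<le> k \<and> k \<le> card V" for k
    using crx_eq_card_iff_cycle_graph_if_hamiltonian[OF assms(1) that(1)] that(2) by blast
qed

end
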